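(* For integers $p\ge1$ and $0\le k\le n$, and all $x$, \[ \sum_{j=0}^{n-k}\binom{n-k}{j}B_{j+k}^{(p)}(x)=\sum_{j=0}^{k}\binom{k}{j}(-1)^{j}\Big\{B_{n-j}^{(p)}(x)+(n-j)B_{n-j-1}^{(p-1)}(x)\Big\}, \] where the term $(n-j)B^{(p-1)}_{n-j-1}(x)$ is taken to be $0$ when $n-j=0$.
   Context: For $p\ge1$, $B_n^{(p)}(x)$ denotes the higher-order Bernoulli polynomial with all parameters equal to $1$: $\sum_{n\ge0}B_n^{(p)}(x)\frac{t^n}{n!}=e^{xt}\left(\frac{t}{e^t-1}\right)^p$; in particular $B_n^{(0)}(x)=x^n$. *)

theory Defs
  imports "HOL-Computational_Algebra.Formal_Power_Series"
begin

definition hbern :: "nat \<Rightarrow> nat \<Rightarrow> real \<Rightarrow> real" where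
  "hbern p n x = fact n * fps_nth (fps_exp x * (fps_X / (fps_exp 1 - 1)) ^ p) n"

lemma hbern_0_sanity: "hbern 0 n x = x ^ n"
  by (simp add: hbern_def)

end

theory Submission
  imports Defs "HOL-Computational_Algebra.Polynomial"
begin

text \<open>
  Proof idea.  The identity splits into a purely combinatorial part and one
  property of the higher-order Bernoulli polynomials.

  Combinatorial part: for any sequence a, read a polynomial q as the number
  \<open>\<Sum>i. coeff q i * a i\<close> (a linear functional).  The left-hand side is the
  value of \<open>X^k (1+X)^(n-k)\<close>, and expanding \<open>X^k = ((1+X) - 1)^k\<close> by the
  binomial theorem writes it as an alternating combination of the values of
  \<open>(1+X)^(n-j)\<close>, i.e. of the binomial transforms \<open>\<Sum>i. C(n-j,i) a i\<close>.

  Bernoulli part: with \<open>F_p = e^{xt} (t/(e^t-1))^p\<close> one has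
  \<open>F_p e^t = F_p + t F_{p-1}\<close>, which on coefficients says that the binomial
  transform of \<open>B^(p)_i(x)\<close> is \<open>B^(p)_n(x) + n B^(p-1)_{n-1}(x)\<close>.

  The main theorem is the combinatorial identity for \<open>a i = B^(p)_i(x)\<close>,
  rewritten with the Bernoulli identity.
\<close>

lemma coeff_one_plus_X_power:
  "coeff ([:1, 1:] ^ q) i = (of_nat (q choose i) :: 'a :: comm_semiring_1)"
proof (cases "i \<le> q")
  case True
  then show ?thesis by (simp add: coeff_linear_poly_power)
next
  case False
  then show ?thesis
    by (simp add: coeff_eq_0 degree_linear_power binomial_eq_0)
qed

text \<open>The linear functional pairing the first \<open>N+1\<close> coefficients of a
  polynomial with the sequence \<open>a\<close>; it is faithful on polynomials of degree
  at most \<open>N\<close>, which are all the polynomials needed below.\<close>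
definition coeff_pairing :: "nat \<Rightarrow> (nat \<Rightarrow> 'a) \<Rightarrow> 'a :: comm_ring_1 poly \<Rightarrow> 'a" where
  "coeff_pairing N a q = (\<Sum>i = 0..N. coeff q i * a i)"

lemma coeff_pairing_sum:
  "coeff_pairing N a (\<Sum>j\<in>J. f j) = (\<Sum>j\<in>J. coeff_pairing N a (f j))"
  unfolding coeff_pairing_def coeff_sum sum_distrib_right by (rule sum.swap)

lemma coeff_pairing_smult:
  "coeff_pairing N a (smult c q) = c * coeff_pairing N a q"
  unfolding coeff_pairing_def by (simp add: sum_distrib_left mult.assoc)

lemma coeff_pairing_one_plus_X_power:
  assumes "q \<le> N"
  shows "coeff_pairing N a ([:1, 1:] ^ q) = (\<Sum>i = 0..q. of_nat (q choose i) * a i)"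
proof -
  have "coeff_pairing N a ([:1, 1:] ^ q) = (\<Sum>i = 0..N. of_nat (q choose i) * a i)"
    unfolding coeff_pairing_def coeff_one_plus_X_power ..
  also have "\<dots> = (\<Sum>i = 0..q. of_nat (q choose i) * a i)"
    by (rule sum.mono_neutral_right) (use assms in \<open>auto simp: binomial_eq_0\<close>)
  finally show ?thesis .
qed

lemma coeff_pairing_monom_times_one_plus_X_power:
  assumes "k + m \<le> N"
  shows "coeff_pairing N a (monom 1 k * [:1, 1:] ^ m) =
           (\<Sum>j = 0..m. of_nat (m choose j) * a (j + k))"
proof -
  have "coeff_pairing N a (monom 1 k * [:1, 1:] ^ m) =
          (\<Sum>i = 0..N. (if i < k then 0 else of_nat (m choose (i - k))) * a i)"
    unfolding coeff_pairing_def coeff_monom_mult coeff_one_plus_X_power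
    by (intro sum.cong) auto
  also have "\<dots> = (\<Sum>i = k..N. of_nat (m choose (i - k)) * a i)"
    by (rule sum.mono_neutral_cong_right) auto
  also have "\<dots> = (\<Sum>j = 0..N - k. of_nat (m choose j) * a (j + k))"
    using assms by (intro sum.reindex_bij_witness[where i="\<lambda>j. j + k" and j="\<lambda>i. i - k"]) auto
  also have "\<dots> = (\<Sum>j = 0..m. of_nat (m choose j) * a (j + k))"
    by (rule sum.mono_neutral_right) (use assms in \<open>auto simp: binomial_eq_0\<close>)
  finally show ?thesis .
qed

lemma monom_times_one_plus_X_power:
  "monom (1 :: 'a :: comm_ring_1) k * [:1, 1:] ^ m =
     (\<Sum>j = 0..k. smult (of_nat (k choose j) * (-1) ^ j) ([:1, 1:] ^ (m + k - j)))"
proof -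
  have "monom (1 :: 'a) k = ([:1, 1:] + (-1)) ^ k"
    by (simp add: monom_altdef one_pCons)
  also have "\<dots> = (\<Sum>j\<le>k. of_nat (k choose j) * (-1) ^ j * [:1, 1:] ^ (k - j))"
    by (subst add.commute, subst binomial_ring) (simp add: mult_ac)
  finally have "monom (1 :: 'a) k * [:1, 1:] ^ m =
     (\<Sum>j\<le>k. of_nat (k choose j) * (-1) ^ j * ([:1, 1:] ^ (k - j) * [:1, 1:] ^ m))"
    by (simp add: sum_distrib_right mult.assoc)
  also have "\<dots> = (\<Sum>j = 0..k. smult (of_nat (k choose j) * (-1) ^ j) ([:1, 1:] ^ (m + k - j)))"
  proof (rule sum.cong)
    fix j assume "j \<in> {0..k}"
    then have "[:1, 1:] ^ (k - j) * [:1, 1 :: 'a:] ^ m = [:1, 1:] ^ (m + k - j)"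
      by (simp flip: power_add add: add.commute)
    moreover have "(-1 :: 'a poly) ^ j = [:(-1) ^ j:]"
      by (induct j) (auto simp: one_pCons)
    ultimately show "of_nat (k choose j) * (-1) ^ j * ([:1, 1:] ^ (k - j) * [:1, 1 :: 'a:] ^ m) =
        smult (of_nat (k choose j) * (-1) ^ j) ([:1, 1:] ^ (m + k - j))"
      by (simp add: of_nat_poly mult.assoc mult.commute[of "(-1 :: 'a) ^ j"])
  qed (auto simp: atLeast0AtMost)
  finally show ?thesis .
qed

lemma shifted_binomial_transform:
  fixes a :: "nat \<Rightarrow> 'a :: comm_ring_1"
  assumes "k \<le> n"
  shows "(\<Sum>j = 0..n - k. of_nat ((n - k) choose j) * a (j + k)) =
    (\<Sum>j = 0..k. of_nat (k choose j) * (-1) ^ j * (\<Sum>i = 0..n - j. of_nat ((n - j) choose i) * a i))"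
proof -
  have "(\<Sum>j = 0..n - k. of_nat ((n - k) choose j) * a (j + k)) =
          coeff_pairing n a (monom 1 k * [:1, 1:] ^ (n - k))"
    using assms by (simp add: coeff_pairing_monom_times_one_plus_X_power)
  also have "\<dots> = (\<Sum>j = 0..k. of_nat (k choose j) * (-1) ^ j *
                     coeff_pairing n a ([:1, 1:] ^ (n - k + k - j)))"
    unfolding monom_times_one_plus_X_power coeff_pairing_sum coeff_pairing_smult ..
  also have "\<dots> = (\<Sum>j = 0..k. of_nat (k choose j) * (-1) ^ j *
                     (\<Sum>i = 0..n - j. of_nat ((n - j) choose i) * a i))"
    using assms by (intro sum.cong refl) (simp add: coeff_pairing_one_plus_X_power)
  finally show ?thesis .
qed

lemma bernoulli_kernel_times:
  "fps_X / (fps_exp 1 - 1) * (fps_exp 1 - 1) = (fps_X :: real fps)"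
proof (rule fps_times_divide_eq)
  show "fps_exp (1 :: real) - 1 \<noteq> 0"
  proof
    assume "fps_exp (1 :: real) - 1 = 0"
    then have "fps_nth (fps_exp (1 :: real) - 1) 1 = 0" by simp
    then show False by simp
  qed
  show "subdegree (fps_exp (1 :: real) - 1) \<le> subdegree (fps_X :: real fps)"
    by (simp add: subdegree_leI)
qed

lemma bernoulli_egf_times_exp:
  fixes x :: real
  defines "F \<equiv> \<lambda>q. fps_exp x * (fps_X / (fps_exp 1 - 1)) ^ q"
  assumes "p \<ge> 1"
  shows "F p * fps_exp 1 = F p + fps_X * F (p - 1)"
proof -
  have "F p = F (p - 1) * (fps_X / (fps_exp 1 - 1))"
    using assms unfolding F_def by (cases p) (auto simp: mult_ac)
  then have "F p * (fps_exp 1 - 1) = fps_X * F (p - 1)"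
    by (simp add: mult.assoc bernoulli_kernel_times mult.commute[of fps_X])
  then show ?thesis by (simp add: algebra_simps)
qed

lemma hbern_binomial_transform:
  assumes "p \<ge> 1"
  shows "(\<Sum>i = 0..n. real (n choose i) * hbern p i x) =
     hbern p n x + (if n = 0 then 0 else real n * hbern (p - 1) (n - 1) x)"
proof -
  define F where "F q = fps_exp x * (fps_X / (fps_exp 1 - 1)) ^ q" for q
  have hbern_F: "hbern q m x = fact m * fps_nth (F q) m" for q m
    unfolding hbern_def F_def ..
  have "(\<Sum>i = 0..n. real (n choose i) * hbern p i x) = fact n * fps_nth (F p * fps_exp 1) n"
    unfolding fps_mult_nth sum_distrib_left hbern_F
  proof (rule sum.cong[OF refl])
    fix i assume "i \<in> {0..n}"
    then show "real (n choose i) * (fact i * fps_nth (F p) i) =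
                 fact n * (fps_nth (F p) i * fps_nth (fps_exp 1) (n - i))"
      by (simp add: binomial_fact field_simps)
  qed
  also have "\<dots> = hbern p n x + (if n = 0 then 0 else real n * hbern (p - 1) (n - 1) x)"
    using bernoulli_egf_times_exp[OF assms, of x]
    by (cases n) (simp_all add: F_def [symmetric] hbern_F algebra_simps)
  finally show ?thesis .
qed

theorem mainTheorem9:
  fixes p k n :: nat and x :: real
  assumes "p \<ge> 1" and "k \<le> n"
  shows "(\<Sum>j = 0..n - k. real ((n - k) choose j) * hbern p (j + k) x) =
    (\<Sum>j = 0..k. real (k choose j) * (-1) ^ j *
       (hbern p (n - j) x +
        (if n - j = 0 then 0 else real (n - j) * hbern (p - 1) (n - j - 1) x)))"
  using shifted_binomial_transform[where a="\<lambda>i. hbern p i x", OF assms(2)]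
  by (simp only: hbern_binomial_transform[OF assms(1)])

end
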